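(* If a graph $G$ contains a bad attachment $\Gamma$ with $V(\Gamma)\ne V(G)$, then $G\notin\mathcal{S}_3$.
   Context: Graphs may have parallel edges but no loops. A bad attachment of $G$ is an induced subgraph $\Gamma$ with $3\le|V(\Gamma)|\le 6$ such that the number of edges of $G$ between $V(\Gamma)$ and $V(G)\setminus V(\Gamma)$ is at most $3|V(\Gamma)|-|E(\Gamma)|$. $G\in\mathcal{S}_3$ means: for every $\beta:V(G)\to\mathbb{Z}_3$ with $\sum_v\beta(v)\equiv0\pmod3$ there is a strongly-connected orientation $D$ of $G$ with $d^+_D(v)-d^-_D(v)\equiv\beta(v)\pmod3$ for all $v$. *)

theory Defs
  imports Main
begin

text \<open>A finite loopless multigraph: vertex set V, edge set E (edges are abstract
  objects, so parallel edges are allowed), and ends e = the pair of endpoints.\<close>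
definition multigraph :: "'v set \<Rightarrow> 'e set \<Rightarrow> ('e \<Rightarrow> 'v \<times> 'v) \<Rightarrow> bool" where
  "multigraph V E ends \<longleftrightarrow> finite V \<and> finite E \<and>
     (\<forall>e\<in>E. fst (ends e) \<in> V \<and> snd (ends e) \<in> V \<and> fst (ends e) \<noteq> snd (ends e))"

definition inner_edges :: "'e set \<Rightarrow> ('e \<Rightarrow> 'v \<times> 'v) \<Rightarrow> 'v set \<Rightarrow> 'e set" where
  "inner_edges E ends S = {e\<in>E. fst (ends e) \<in> S \<and> snd (ends e) \<in> S}"

definition cut_edges :: "'e set \<Rightarrow> ('e \<Rightarrow> 'v \<times> 'v) \<Rightarrow> 'v set \<Rightarrow> 'e set" where
  "cut_edges E ends S = {e\<in>E. (fst (ends e) \<in> S) \<noteq> (snd (ends e) \<in> S)}"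

text \<open>S is the vertex set of a bad attachment (the induced subgraph on S).\<close>
definition bad_attachment :: "'v set \<Rightarrow> 'e set \<Rightarrow> ('e \<Rightarrow> 'v \<times> 'v) \<Rightarrow> 'v set \<Rightarrow> bool" where
  "bad_attachment V E ends S \<longleftrightarrow> S \<subseteq> V \<and> 3 \<le> card S \<and> card S \<le> 6 \<and>
     int (card (cut_edges E ends S)) \<le> 3 * int (card S) - int (card (inner_edges E ends S))"

text \<open>An orientation is D :: 'e \<Rightarrow> bool; D e = True orients e from fst (ends e)
  to snd (ends e), otherwise in the reverse direction.\<close>
definition arc :: "('e \<Rightarrow> 'v \<times> 'v) \<Rightarrow> ('e \<Rightarrow> bool) \<Rightarrow> 'e \<Rightarrow> 'v \<times> 'v" where
  "arc ends D e = (if D e then ends e else prod.swap (ends e))"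

definition outdeg :: "'e set \<Rightarrow> ('e \<Rightarrow> 'v \<times> 'v) \<Rightarrow> ('e \<Rightarrow> bool) \<Rightarrow> 'v \<Rightarrow> nat" where
  "outdeg E ends D v = card {e\<in>E. fst (arc ends D e) = v}"

definition indeg :: "'e set \<Rightarrow> ('e \<Rightarrow> 'v \<times> 'v) \<Rightarrow> ('e \<Rightarrow> bool) \<Rightarrow> 'v \<Rightarrow> nat" where
  "indeg E ends D v = card {e\<in>E. snd (arc ends D e) = v}"

definition strongly_connected_orient ::
  "'v set \<Rightarrow> 'e set \<Rightarrow> ('e \<Rightarrow> 'v \<times> 'v) \<Rightarrow> ('e \<Rightarrow> bool) \<Rightarrow> bool" where
  "strongly_connected_orient V E ends D \<longleftrightarrow>
     (\<forall>u\<in>V. \<forall>v\<in>V. (u, v) \<in> (arc ends D ` E)\<^sup>*)"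

text \<open>Membership in S_3; Z_3-valued beta represented by integers modulo 3.\<close>
definition in_S3 :: "'v set \<Rightarrow> 'e set \<Rightarrow> ('e \<Rightarrow> 'v \<times> 'v) \<Rightarrow> bool" where
  "in_S3 V E ends \<longleftrightarrow>
     (\<forall>\<beta> :: 'v \<Rightarrow> int. (\<Sum>v\<in>V. \<beta> v) mod 3 = 0 \<longrightarrow>
        (\<exists>D. strongly_connected_orient V E ends D \<and>
             (\<forall>v\<in>V. (int (outdeg E ends D v) - int (indeg E ends D v)) mod 3 = \<beta> v mod 3)))"

end

theory Submission
  imports Defs
begin

text \<open>Put \<open>\<beta> = -deg\<close> on \<open>S\<close> and compensate at one vertex outside \<open>S\<close>. Since
  \<open>d\<^sup>+ - d\<^sup>- \<equiv> -(d\<^sup>+ + d\<^sup>-)\<close> forces \<open>2d\<^sup>+ \<equiv> 0\<close>, every vertex of \<open>S\<close> gets out-degree divisible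
  by 3, and positive by strong connectivity, hence at least 3. So at least \<open>3|S|\<close> arcs
  leave vertices of \<open>S\<close>; these are inner or cut edges, and at least one cut edge must
  point into \<open>S\<close>. Hence \<open>3|S| < |E(\<Gamma>)| + |\<partial>S|\<close>, contradicting badness.\<close>

definition degree :: "'e set \<Rightarrow> ('e \<Rightarrow> 'v \<times> 'v) \<Rightarrow> 'v \<Rightarrow> nat" where
  "degree E ends v = card {e\<in>E. fst (ends e) = v} + card {e\<in>E. snd (ends e) = v}"

lemma card_Collect_split:
  assumes "finite E"
  shows "card {e\<in>E. Q e} = card {e\<in>E. P e \<and> Q e} + card {e\<in>E. \<not> P e \<and> Q e}"
  by (subst card_Un_disjoint[symmetric]) (use assms in \<open>auto intro!: arg_cong[where f=card]\<close>)

lemma outdeg_plus_indeg: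
  assumes "finite E"
  shows "outdeg E ends D v + indeg E ends D v = degree E ends v"
proof -
  have "outdeg E ends D v = card {e\<in>E. D e \<and> fst (ends e) = v} + card {e\<in>E. \<not> D e \<and> snd (ends e) = v}"
    unfolding outdeg_def
    by (subst card_Un_disjoint[symmetric]) (use assms in \<open>auto intro!: arg_cong[where f=card] simp: arc_def\<close>)
  moreover have "indeg E ends D v = card {e\<in>E. D e \<and> snd (ends e) = v} + card {e\<in>E. \<not> D e \<and> fst (ends e) = v}"
    unfolding indeg_def
    by (subst card_Un_disjoint[symmetric]) (use assms in \<open>auto intro!: arg_cong[where f=card] simp: arc_def\<close>)
  ultimately show ?thesis
    using card_Collect_split[OF assms, where P = D and Q = "\<lambda>e. fst (ends e) = v"]
      card_Collect_split[OF assms, where P = D and Q = "\<lambda>e. snd (ends e) = v"]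
    unfolding degree_def by linarith
qed

lemma sum_card_fibres:
  assumes "finite E" "finite S"
  shows "(\<Sum>v\<in>S. card {e\<in>E. f e = v}) = card {e\<in>E. f e \<in> S}"
proof -
  have "{e\<in>E. f e \<in> S} = (\<Union>v\<in>S. {e\<in>E. f e = v})" by auto
  also have "card \<dots> = (\<Sum>v\<in>S. card {e\<in>E. f e = v})"
    by (subst card_UN_disjoint) (use assms in auto)
  finally show ?thesis ..
qed

lemma sum_outdeg:
  assumes "finite E" "finite S"
  shows "(\<Sum>v\<in>S. outdeg E ends D v) = card {e\<in>E. fst (arc ends D e) \<in> S}"
  unfolding outdeg_def by (rule sum_card_fibres[OF assms])

lemma rtrancl_enters:
  assumes "(a, b) \<in> R\<^sup>*" "a \<notin> S" "b \<in> S"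
  shows "\<exists>x y. (x, y) \<in> R \<and> x \<notin> S \<and> y \<in> S"
  using assms by (induction rule: rtrancl_induct) auto

lemma strongly_connected_outdeg_pos:
  assumes "finite E" "strongly_connected_orient V E ends D"
    and "v \<in> V" "w \<in> V" "v \<noteq> w"
  shows "0 < outdeg E ends D v"
proof -
  have "(v, w) \<in> (arc ends D ` E)\<^sup>*"
    using assms(2-4) unfolding strongly_connected_orient_def by blast
  then obtain x where "(v, x) \<in> arc ends D ` E"
    using assms(5) by (metis converse_rtranclE)
  then obtain e where "e \<in> E" "arc ends D e = (v, x)" by (metis imageE)
  moreover have "finite {e\<in>E. fst (arc ends D e) = v}" using assms(1) by simp
  ultimately show ?thesis unfolding outdeg_def by (metis (mono_tags, lifting) card_gt_0_iff empty_iff fst_conv mem_Collect_eq)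
qed

lemma strongly_connected_arc_enters:
  assumes "strongly_connected_orient V E ends D"
    and "w \<in> V" "w \<notin> S" "s \<in> S" "S \<subseteq> V"
  obtains e where "e \<in> E" "fst (arc ends D e) \<notin> S" "snd (arc ends D e) \<in> S"
proof -
  have "(w, s) \<in> (arc ends D ` E)\<^sup>*"
    using assms unfolding strongly_connected_orient_def by blast
  then obtain x y where "(x, y) \<in> arc ends D ` E" "x \<notin> S" "y \<in> S"
    using rtrancl_enters assms(3,4) by metis
  then obtain e where "e \<in> E" "arc ends D e = (x, y)" by (metis imageE)
  with \<open>x \<notin> S\<close> \<open>y \<in> S\<close> show ?thesis using that by simp
qed

lemma arc_enters_cut_edge:
  assumes "e \<in> E" "fst (arc ends D e) \<notin> S" "snd (arc ends D e) \<in> S"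
  shows "e \<in> cut_edges E ends S"
  using assms by (cases "D e") (auto simp: arc_def cut_edges_def)

lemma card_arcs_from_less:
  assumes "finite E" "e0 \<in> E" "fst (arc ends D e0) \<notin> S" "snd (arc ends D e0) \<in> S"
  shows "card {e\<in>E. fst (arc ends D e) \<in> S}
           < card (inner_edges E ends S) + card (cut_edges E ends S)"
proof -
  let ?C = "inner_edges E ends S \<union> cut_edges E ends S"
  have fin: "finite ?C" using assms(1) by (auto simp: inner_edges_def cut_edges_def)
  have "{e\<in>E. fst (arc ends D e) \<in> S} \<subseteq> ?C - {e0}"
    using assms(3) by (auto simp: arc_def inner_edges_def cut_edges_def split: if_splits)
  moreover have "e0 \<in> ?C" using arc_enters_cut_edge[OF assms(2-4)] by blast
  ultimately have "card {e\<in>E. fst (arc ends D e) \<in> S} < card ?C"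
    using card_mono[OF finite_Diff[OF fin]] card_Diff1_less[OF fin] le_less_trans by blast
  also have "\<dots> \<le> card (inner_edges E ends S) + card (cut_edges E ends S)"
    by (rule card_Un_le)
  finally show ?thesis .
qed

lemma in_S3_outdeg_ge_3:
  assumes "in_S3 V E ends" "finite V" "finite E"
    and "S \<subseteq> V" "w \<in> V" "w \<notin> S"
  obtains D where "strongly_connected_orient V E ends D"
    and "\<And>v. v \<in> S \<Longrightarrow> 3 \<le> outdeg E ends D v"
proof -
  define \<beta> where "\<beta> v = (if v \<in> S then - int (degree E ends v)
      else if v = w then (\<Sum>u\<in>S. int (degree E ends u)) else 0)" for v
  have "(\<Sum>v\<in>V. \<beta> v) = (\<Sum>v\<in>S. \<beta> v) + (\<Sum>v\<in>V - S. \<beta> v)"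
    using assms(2,4) by (metis sum.subset_diff add.commute)
  also have "(\<Sum>v\<in>V - S. \<beta> v) = (\<Sum>v\<in>V - S. if v = w then (\<Sum>u\<in>S. int (degree E ends u)) else 0)"
    by (rule sum.cong) (auto simp: \<beta>_def)
  finally have "(\<Sum>v\<in>V. \<beta> v) = 0"
    using assms(2,5,6) by (simp add: \<beta>_def sum_negf sum.delta)
  then obtain D where sc: "strongly_connected_orient V E ends D"
    and bD: "\<forall>v\<in>V. (int (outdeg E ends D v) - int (indeg E ends D v)) mod 3 = \<beta> v mod 3"
    using assms(1)[unfolded in_S3_def, rule_format, of \<beta>] by auto
  have dvd: "3 dvd outdeg E ends D v" if "v \<in> S" for v
  proof -
    have "(int (outdeg E ends D v) - int (indeg E ends D v)) mod 3
          = (- (int (outdeg E ends D v) + int (indeg E ends D v))) mod 3"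
      using bD that assms(4) outdeg_plus_indeg[OF assms(3), where D = D and v = v]
      by (auto simp: \<beta>_def simp flip: of_nat_add)
    then show ?thesis by presburger
  qed
  have "3 \<le> outdeg E ends D v" if "v \<in> S" for v
  proof -
    have "0 < outdeg E ends D v"
      using strongly_connected_outdeg_pos[OF assms(3) sc _ assms(5)] that assms(4,6) by blast
    then show ?thesis using dvd[OF that] by (simp add: dvd_imp_le)
  qed
  with sc show ?thesis by (rule that)
qed

theorem mainTheorem8:
  fixes V :: "'v set" and E :: "'e set" and ends :: "'e \<Rightarrow> 'v \<times> 'v" and S :: "'v set"
  assumes "multigraph V E ends"
    and "bad_attachment V E ends S"
    and "S \<noteq> V"
  shows "\<not> in_S3 V E ends"
proof
  assume S3: "in_S3 V E ends"
  have finV: "finite V" and finE: "finite E" using assms(1) by (auto simp: multigraph_def)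
  have SV: "S \<subseteq> V" and "S \<noteq> {}"
    and bad: "card (cut_edges E ends S) + card (inner_edges E ends S) \<le> 3 * card S"
    using assms(2) by (auto simp: bad_attachment_def)
  have finS: "finite S" using SV finV finite_subset by blast
  obtain w where w: "w \<in> V" "w \<notin> S" using SV assms(3) by blast
  obtain s where s: "s \<in> S" using \<open>S \<noteq> {}\<close> by blast
  obtain D where sc: "strongly_connected_orient V E ends D"
    and out3: "\<And>v. v \<in> S \<Longrightarrow> 3 \<le> outdeg E ends D v"
    using in_S3_outdeg_ge_3[OF S3 finV finE SV w] by blast
  obtain e0 where e0: "e0 \<in> E" "fst (arc ends D e0) \<notin> S" "snd (arc ends D e0) \<in> S"
    using strongly_connected_arc_enters[OF sc w s SV] .
  have "3 * card S = (\<Sum>v\<in>S. 3)" by simp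
  also have "\<dots> \<le> (\<Sum>v\<in>S. outdeg E ends D v)" by (rule sum_mono) (rule out3)
  also have "\<dots> = card {e\<in>E. fst (arc ends D e) \<in> S}" by (rule sum_outdeg[OF finE finS])
  also have "\<dots> < card (inner_edges E ends S) + card (cut_edges E ends S)"
    by (rule card_arcs_from_less[OF finE e0])
  finally show False using bad by linarith
qed

end
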